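(* Let $R$ be a field, and let $\ell,\ell'\in R[x]$ be of degree $1$; write $\ell'=r\ell-s$ with $r\in R^{*}$ and $s\in R$. Then $\ell'\sim\ell$ if and only if exactly one of the following holds: (1) $r=1$ and $s=0$ (i.e. $\ell'=\ell$); or (2) $r\neq1$, $s\neq0$, and $\frac{s}{r-1}$ has infinite multiplicative order in $R^{*}$.
   Context: For a ring $S$ and $\ell,\ell'\in S$, $\ell$ and $\ell'$ are called 1-connected, written $\ell\sim\ell'$, if for all positive integers $m,n$ such that $(\ell-\ell')\mid(\ell^m-(\ell')^n)$ we must have $m=n$. $R[x]$ is the polynomial ring in one indeterminate over the field $R$. *)

theory Defs
  imports "HOL-Computational_Algebra.Polynomial"
begin

definition one_connected :: "'a::comm_ring_1 \<Rightarrow> 'a \<Rightarrow> bool" where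
  "one_connected l l' \<longleftrightarrow>
     (\<forall>m n::nat. 0 < m \<longrightarrow> 0 < n \<longrightarrow> (l - l') dvd (l ^ m - l' ^ n) \<longrightarrow> m = n)"

definition infinite_mult_order :: "'a::field \<Rightarrow> bool" where
  "infinite_mult_order a \<longleftrightarrow> a \<noteq> 0 \<and> (\<forall>n::nat. 0 < n \<longrightarrow> a ^ n \<noteq> 1)"

end

theory Submission
  imports Defs
begin

text \<open>If \<open>\<ell>' - \<ell>\<close> is linear with root \<open>x\<close>, divisibility by it is vanishing at \<open>x\<close>, and there
  \<open>\<ell>'\<close> and \<open>\<ell>\<close> take the same value \<open>t\<close>; so \<open>\<ell>' \<sim> \<ell>\<close> reduces to \<open>t\<^sup>m = t\<^sup>n \<Longrightarrow> m = n\<close>,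
  i.e. to \<open>t\<close> having infinite order. For \<open>\<ell>' = r\<ell> - s\<close> with \<open>r \<noteq> 1\<close> that common value is
  \<open>t = s/(r - 1)\<close>. For \<open>r = 1\<close> the difference is the constant \<open>-s\<close>: a unit dividing everything
  when \<open>s \<noteq> 0\<close>, and when \<open>s = 0\<close> the powers of \<open>\<ell>\<close> are distinguished by their degrees.\<close>

lemma one_connected_self_iff:
  "one_connected a a \<longleftrightarrow> (\<forall>m n::nat. 0 < m \<longrightarrow> 0 < n \<longrightarrow> a ^ m = a ^ n \<longrightarrow> m = n)"
  by (simp add: one_connected_def)

lemma not_one_connected_if_unit:
  assumes "is_unit (a - b)"
  shows "\<not> one_connected a b"
proof
  assume conn: "one_connected a b"
  have "(a - b) dvd (a ^ 1 - b ^ 2)"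
    using assms by (rule unit_imp_dvd)
  with conn[unfolded one_connected_def, rule_format, of 1 2] show False
    by simp
qed

lemma one_connected_self_iff_infinite_mult_order:
  fixes a :: "'a::field"
  shows "one_connected a a \<longleftrightarrow> infinite_mult_order a"
proof
  assume conn: "one_connected a a"
  have "a \<noteq> 0"
  proof
    assume "a = 0"
    then have "a ^ 1 = a ^ 2" by simp
    with conn[unfolded one_connected_self_iff, rule_format, of 1 2] show False
      by simp
  qed
  moreover have "a ^ k \<noteq> 1" if "0 < k" for k :: nat
  proof
    assume "a ^ k = 1"
    then have "a ^ (k + 1) = a ^ 1" by (simp add: power_add)
    with conn[unfolded one_connected_self_iff, rule_format, of "k + 1" 1] have "k + 1 = 1"
      by simp
    with \<open>0 < k\<close> show False by simp
  qed
  ultimately show "infinite_mult_order a"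
    by (simp add: infinite_mult_order_def)
next
  assume ord: "infinite_mult_order a"
  have "m = n" if "0 < m" "0 < n" "a ^ m = a ^ n" for m n :: nat
  proof (rule ccontr)
    assume "m \<noteq> n"
    then obtain i k where "{m, n} = {i, i + k}" "0 < k"
      by (metis insert_commute less_imp_add_positive linorder_neqE_nat)
    with \<open>a ^ m = a ^ n\<close> have "a ^ i * a ^ k = a ^ i * 1"
      by (auto simp: power_add doubleton_eq_iff)
    with ord \<open>0 < k\<close> show False
      by (simp add: infinite_mult_order_def)
  qed
  then show "one_connected a a"
    by (simp add: one_connected_self_iff)
qed

lemma one_connected_self_if_degree_pos:
  fixes p :: "'a::idom poly"
  assumes "0 < degree p"
  shows "one_connected p p"
  unfolding one_connected_self_iff
  using assms by (metis degree_power_eq degree_0 mult_right_cancel neq0_conv)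

lemma degree_1_dvd_iff_poly_eq_0:
  fixes p q :: "'a::field poly"
  assumes "degree q = 1" and "poly q x = 0"
  shows "q dvd p \<longleftrightarrow> poly p x = 0"
proof -
  obtain a b where "q = [:b, a:]" and "a \<noteq> 0"
    using assms(1) by (rule degree1_coeffs)
  with assms(2) have "q = smult a [:-x, 1:]"
    by (simp add: eq_neg_iff_add_eq_0 mult.commute)
  with \<open>a \<noteq> 0\<close> show ?thesis
    by (simp only: smult_dvd_iff poly_eq_0_iff_dvd) simp
qed

lemma one_connected_iff_poly_at_root:
  fixes p q :: "'a::field poly"
  assumes "degree (p - q) = 1" and "poly (p - q) x = 0"
  shows "one_connected p q \<longleftrightarrow> one_connected (poly p x) (poly q x)"
proof -
  have "poly p x = poly q x"
    using assms(2) by simp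
  then have "(p - q) dvd (p ^ m - q ^ n) \<longleftrightarrow> (poly p x - poly q x) dvd (poly p x ^ m - poly q x ^ n)"
    for m n :: nat
    using degree_1_dvd_iff_poly_eq_0[OF assms] by simp
  then show ?thesis
    by (simp add: one_connected_def)
qed

lemma degree_1_poly_surj:
  fixes p :: "'a::field poly"
  assumes "degree p = 1"
  obtains x where "poly p x = c"
proof -
  obtain a b where "p = [:b, a:]" and "a \<noteq> 0"
    using assms by (rule degree1_coeffs)
  then have "poly p ((c - b) / a) = c"
    by simp
  then show thesis
    by (rule that)
qed

theorem lemma2p7:
  fixes l l' :: "'a::field poly" and r s :: 'a
  assumes "degree l = 1" and "degree l' = 1"
    and "r \<noteq> 0"
    and "l' = smult r l - [:s:]"
  shows "one_connected l' l \<longleftrightarrow>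
           ((r = 1 \<and> s = 0) \<and> \<not> (r \<noteq> 1 \<and> s \<noteq> 0 \<and> infinite_mult_order (s / (r - 1))))
         \<or> ((r \<noteq> 1 \<and> s \<noteq> 0 \<and> infinite_mult_order (s / (r - 1))) \<and> \<not> (r = 1 \<and> s = 0))"
proof (cases "r = 1")
  case True
  show ?thesis
  proof (cases "s = 0")
    case True
    with \<open>r = 1\<close> have "l' = l"
      using assms(4) by simp
    then show ?thesis
      using True \<open>r = 1\<close> assms(1) by (simp add: one_connected_self_if_degree_pos)
  next
    case False
    from \<open>r = 1\<close> have "l' - l = [:-s:]"
      using assms(4) by simp
    with False have "is_unit (l' - l)"
      by (simp add: is_unit_const_poly_iff dvd_field_iff)
    then show ?thesis
      using False \<open>r = 1\<close> not_one_connected_if_unit by blast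
  qed
next
  case False
  define t where "t = s / (r - 1)"
  obtain x where x: "poly l x = t"
    using assms(1) by (rule degree_1_poly_surj)
  have "l' - l = smult (r - 1) l - [:s:]"
    by (simp add: assms(4) smult_diff_left)
  moreover have "degree [:s:] < degree (smult (r - 1) l)"
    using False assms(1) by simp
  ultimately have "degree (l' - l) = 1"
    using False assms(1) by (metis degree_add_eq_left degree_minus degree_smult_eq diff_conv_add_uminus right_minus_eq)
  moreover have "poly l' x = t"
    using False by (simp add: assms(4) x t_def field_simps)
  ultimately have "one_connected l' l \<longleftrightarrow> one_connected t t"
    using one_connected_iff_poly_at_root[of l' l x] by (simp add: x)
  also have "\<dots> \<longleftrightarrow> infinite_mult_order t"
    by (rule one_connected_self_iff_infinite_mult_order)
  finally show ?thesis
    using False by (auto simp: t_def infinite_mult_order_def)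
qed

end
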